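(* For each $r\in\mathcal R_n$ and $a\in A(r)$, the map $A(r^a)\to A(r)$, $(b_1,\dots,b_n,b_{n+1})\mapsto(b_1,\dots,b_n)$, is surjective.
   Context: $\mathcal R_n$ is the set of real symmetric $n\times n$ matrices with zero diagonal, nonnegative entries and $r_{i,k}+r_{k,j}\ge r_{i,j}$. For $r\in\mathcal R_n$, $A(r)=\{a\in\mathbb R^n: |a_i-a_j|\le r_{i,j}\le a_i+a_j\ \forall i,j\}$, and for $a\in A(r)$, $r^a\in\mathcal R_{n+1}$ is $r$ bordered by $a$ as last row and column (with $0$ on the diagonal). *)

theory Defs
  imports Complex_Main
begin

text \<open>Real n-by-n matrices are represented as functions nat => nat => real, only indices < n
  being relevant; vectors in R^n as functions nat => real with indices < n.\<close>

definition R :: "nat \<Rightarrow> (nat \<Rightarrow> nat \<Rightarrow> real) set" where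
  "R n = {r. (\<forall>i<n. \<forall>j<n. r i j = r j i \<and> r i j \<ge> 0) \<and> (\<forall>i<n. r i i = 0)
            \<and> (\<forall>i<n. \<forall>j<n. \<forall>k<n. r i k + r k j \<ge> r i j)}"

definition A :: "nat \<Rightarrow> (nat \<Rightarrow> nat \<Rightarrow> real) \<Rightarrow> (nat \<Rightarrow> real) set" where
  "A n r = {a. (\<forall>i<n. \<forall>j<n. \<bar>a i - a j\<bar> \<le> r i j \<and> r i j \<le> a i + a j)
              \<and> (\<forall>i\<ge>n. a i = 0)}"

text \<open>r^a: r bordered by a as last (index n) row and column, zero on the diagonal.\<close>
definition border :: "nat \<Rightarrow> (nat \<Rightarrow> nat \<Rightarrow> real) \<Rightarrow> (nat \<Rightarrow> real) \<Rightarrow> (nat \<Rightarrow> nat \<Rightarrow> real)" where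
  "border n r a = (\<lambda>i j. if i = n \<and> j = n then 0 else if i = n then a j
                         else if j = n then a i else r i j)"

definition proj :: "nat \<Rightarrow> (nat \<Rightarrow> real) \<Rightarrow> (nat \<Rightarrow> real)" where
  "proj n b = (\<lambda>i. if i < n then b i else 0)"

end

theory Submission
  imports Defs
begin

text \<open>A point b of A(r) lifts to (b, c) in A(r^a) as soon as 0 \<le> c and
  |a_i - b_i| \<le> c \<le> a_i + b_i for all i. Such a c exists because
  |a_i - b_i| \<le> a_j + b_j for all i, j: indeed a_i \<le> a_j + r_ij and r_ij \<le> b_i + b_j,
  and symmetrically. So c = max(0, max_i |a_i - b_i|) works. Only the defining inequalities
  of A(r) are used.\<close>

lemma A_nonneg:
  assumes "a \<in> A n r" and "i < n"
  shows "0 \<le> a i"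
proof -
  have "\<bar>a i - a i\<bar> \<le> r i i \<and> r i i \<le> a i + a i"
    using assms unfolding A_def by blast
  then show ?thesis by linarith
qed

lemma A_abs_diff_le_add:
  assumes "a \<in> A n r" and "b \<in> A n r" and "i < n" and "j < n"
  shows "\<bar>a i - b i\<bar> \<le> a j + b j"
proof -
  have "\<bar>a i - a j\<bar> \<le> r i j" "r i j \<le> b i + b j"
       "\<bar>b i - b j\<bar> \<le> r i j" "r i j \<le> a i + a j"
    using assms unfolding A_def by blast+
  then show ?thesis by (auto simp: abs_le_iff)
qed

lemma A_border_coordinate_exists:
  assumes "a \<in> A n r" and "b \<in> A n r"
  obtains c where "0 \<le> c" and "\<forall>i<n. \<bar>a i - b i\<bar> \<le> c \<and> c \<le> a i + b i"
proof
  let ?S = "insert 0 ((\<lambda>i. \<bar>a i - b i\<bar>) ` {..<n})"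
  show "0 \<le> Max ?S"
    by (simp add: Max_ge_iff)
  have "Max ?S \<le> a j + b j" if "j < n" for j
    using that assms A_nonneg[OF assms(1)] A_nonneg[OF assms(2)] A_abs_diff_le_add
    by auto
  then show "\<forall>i<n. \<bar>a i - b i\<bar> \<le> Max ?S \<and> Max ?S \<le> a i + b i"
    by (simp add: Max_ge_iff)
qed

lemma A_border_fun_updI:
  assumes "b \<in> A n r" and "0 \<le> c" and "\<forall>i<n. \<bar>a i - b i\<bar> \<le> c \<and> c \<le> a i + b i"
  shows "b(n := c) \<in> A (Suc n) (border n r a)"
  using assms by (auto simp: A_def border_def less_Suc_eq abs_le_iff)

theorem corollary1:
  assumes "r \<in> R n" and "a \<in> A n r"
  shows "proj n ` A (Suc n) (border n r a) = A n r"
proof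
  show "proj n ` A (Suc n) (border n r a) \<subseteq> A n r"
    by (auto simp: A_def proj_def border_def)
next
  show "A n r \<subseteq> proj n ` A (Suc n) (border n r a)"
  proof
    fix b assume b: "b \<in> A n r"
    obtain c where "0 \<le> c" "\<forall>i<n. \<bar>a i - b i\<bar> \<le> c \<and> c \<le> a i + b i"
      using A_border_coordinate_exists[OF assms(2) b] .
    with b have "b(n := c) \<in> A (Suc n) (border n r a)"
      by (rule A_border_fun_updI)
    moreover have "proj n (b(n := c)) = b"
      using b by (auto simp: proj_def A_def)
    ultimately show "b \<in> proj n ` A (Suc n) (border n r a)"
      by (metis image_eqI)
  qed
qed

end
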